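(* Let $\mu$ be a probability measure on $\mathbb{C}$ with compact support such that $0 \in \operatorname{supp}(\mu)$, and let $X_1, X_2, \ldots$ be iid with distribution $\mu$. For each $n$ let $\xi_1^{(n)}, \ldots, \xi_{k_n}^{(n)}$ be deterministic complex numbers with $k_n \le K$ for a constant $K$ independent of $n$. Fix $\varepsilon>0$ and an integer $s\ge 0$, and suppose that for all sufficiently large $n$, $\xi_1^{(n)},\ldots,\xi_s^{(n)}$ lie outside $N_\mu(3\varepsilon)$ and $\xi_{s+1}^{(n)},\ldots,\xi_{k_n}^{(n)}$ lie in $N_\mu(\varepsilon)$. Let $D_{\mathrm{in}} := \operatorname{diag}(X_1, \ldots, X_{n-k_n}, \xi_{s+1}^{(n)}, \ldots, \xi_{k_n}^{(n)})$, an $(n-s)\times(n-s)$ matrix, let $J_{n-s}$ be the $(n-s)\times(n-s)$ all-ones matrix, $I$ the identity, and $\mathbf{1}$ the all-ones vector of length $n-s$. Then there is a deterministic constant $C>0$ such that, almost surely, for all sufficiently large $n$: the matrix $zI - D_{\mathrm{in}} + \frac{1}{n} D_{\mathrm{in}} J_{n-s}$ is invertible for every $z \notin N_\mu(2\varepsilon)$; the function \[ z \mapsto \frac{1}{n}\mathbf{1}^{\mathrm T}\left(zI - D_{\mathrm{in}} + \tfrac{1}{n}D_{\mathrm{in}}J_{n-s}\right)^{-1} D_{\mathrm{in}}\mathbf{1} \] is analytic on $\mathbb{C}\setminus \overline{N_\mu(2\varepsilon)}$ (outside $N_\mu(2\varepsilon)$); and \[ \sup_{z \in \mathbb{C}\setminus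 N_\mu(2\varepsilon)} \left| \frac{1}{n}\mathbf{1}^{\mathrm T}\left(zI - D_{\mathrm{in}} + \tfrac{1}{n}D_{\mathrm{in}}J_{n-s}\right)^{-1} D_{\mathrm{in}}\mathbf{1}\right| \le C. \]
   Context: $m_\mu(z) := \int_{\mathbb{C}} \frac{d\mu(x)}{z-x}$ for $z \notin \operatorname{supp}(\mu)$; $M_\mu := \{ z \in \mathbb{C}\setminus \operatorname{supp}(\mu) : m_\mu(z) = 0\}$; and $N_\mu(\varepsilon) := \{ z \in \mathbb{C} : \operatorname{dist}(z, \operatorname{supp}(\mu) \cup M_\mu) < \varepsilon\}$. *)

theory Defs
  imports "HOL-Probability.Probability" "Jordan_Normal_Form.Gauss_Jordan_Elimination"
begin

definition msupp :: "complex measure \<Rightarrow> complex set" where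
  "msupp \<mu> = {x. \<forall>e>0. emeasure \<mu> (ball x e) > 0}"

definition stieltjes :: "complex measure \<Rightarrow> complex \<Rightarrow> complex" where
  "stieltjes \<mu> z = integral\<^sup>L \<mu> (\<lambda>x. 1 / (z - x))"

definition Mset :: "complex measure \<Rightarrow> complex set" where
  "Mset \<mu> = {z. z \<notin> msupp \<mu> \<and> stieltjes \<mu> z = 0}"

definition Nbhd :: "complex measure \<Rightarrow> real \<Rightarrow> complex set" where
  "Nbhd \<mu> \<epsilon> = {z. infdist z (msupp \<mu> \<union> Mset \<mu>) < \<epsilon>}"

text \<open>D_in = diag(x_1,...,x_{n-k}, xi_{s+1},...,xi_k), an (n-s)x(n-s) matrix.
  The random sequence is 0-based here: diagonal entry i < n-k is x i (= X_{i+1}).\<close>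
definition Din :: "(nat \<Rightarrow> complex) \<Rightarrow> (nat \<Rightarrow> complex) \<Rightarrow> nat \<Rightarrow> nat \<Rightarrow> nat \<Rightarrow> complex mat" where
  "Din x xi k s n = mat (n - s) (n - s)
     (\<lambda>(i, j). if i = j then (if i < n - k then x i else xi (i - (n - k) + s + 1)) else 0)"

definition onesJ :: "nat \<Rightarrow> complex mat" where
  "onesJ m = mat m m (\<lambda>_. 1)"

definition onesv :: "nat \<Rightarrow> complex vec" where
  "onesv m = vec m (\<lambda>_. 1)"

definition Rmat :: "complex mat \<Rightarrow> nat \<Rightarrow> nat \<Rightarrow> complex \<Rightarrow> complex mat" where
  "Rmat D m n z = z \<cdot>\<^sub>m 1\<^sub>m m - D + (1 / of_nat n) \<cdot>\<^sub>m (D * onesJ m)"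

definition Ffun :: "complex mat \<Rightarrow> nat \<Rightarrow> nat \<Rightarrow> complex \<Rightarrow> complex" where
  "Ffun D m n z = (1 / of_nat n) *
     (onesv m \<bullet> (the (mat_inverse (Rmat D m n z)) *\<^sub>v (D *\<^sub>v onesv m)))"

end

theory Submission
  imports Defs "Jordan_Normal_Form.Determinant"
begin

text \<open>
  For a diagonal \<open>D = diag(d\<^sub>i)\<close>, the matrix \<open>zI - D + n\<^sup>-\<^sup>1 D J\<close> is a diagonal matrix plus
  a rank-one term, so it is invertible as soon as \<open>z \<noteq> d\<^sub>i\<close> and \<open>1 + w(z) \<noteq> 0\<close>, where
  \<open>w(z) = n\<^sup>-\<^sup>1 \<Sum> d\<^sub>i / (z - d\<^sub>i)\<close>, and then \<open>n\<^sup>-\<^sup>1 1\<^sup>T (zI - D + n\<^sup>-\<^sup>1 D J)\<^sup>-\<^sup>1 D 1 = w / (1 + w)\<close>.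
  Since \<open>d / (z - d) = z / (z - d) - 1\<close>, the quantity \<open>1 + w(z)\<close> differs by \<open>O(K / n)\<close> from the
  empirical mean of \<open>z / (z - X\<^sub>i)\<close>, which by the strong law of large numbers tends to
  \<open>z m\<^sub>\<mu>(z)\<close>. Outside \<open>N\<^sub>\<mu>(2\<epsilon>)\<close> this limit is bounded away from \<open>0\<close>: on bounded sets by
  compactness, since it vanishes only on \<open>M\<^sub>\<mu> \<union> {0}\<close>, and far out because its real part is at
  least \<open>1/2\<close>. The maps \<open>z \<mapsto> z / (z - x)\<close>, \<open>x \<in> supp \<mu>\<close>, are uniformly Lipschitz away from the
  support, so convergence on a finite net makes the lower bound uniform in \<open>z\<close>. Hence
  eventually \<open>|1 + w| \<ge> c/2\<close> outside \<open>N\<^sub>\<mu>(2\<epsilon>)\<close>, which gives invertibility, analyticity of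
  \<open>w / (1 + w)\<close> and the bound \<open>1 + 2/c\<close>.
\<close>

subsection \<open>The resolvent of a diagonal matrix plus a rank-one term\<close>

lemma Rmat_diag_eq:
  assumes D: "D = mat m m (\<lambda>(i, j). if i = j then d i else 0)"
  shows "Rmat D m n z = mat m m (\<lambda>(i, j). (if i = j then z - d i else 0) + d i / of_nat n)"
proof (rule eq_matI)
  fix i j assume "i < dim_row (mat m m (\<lambda>(i, j). (if i = j then z - d i else 0) + d i / of_nat n))"
    and "j < dim_col (mat m m (\<lambda>(i, j). (if i = j then z - d i else 0) + d i / of_nat n))"
  then have i: "i < m" and j: "j < m" by auto
  have "(D * onesJ m) $$ (i, j) = (\<Sum>k = 0..<m. if i = k then d i else 0)"
    using i j by (auto simp: D onesJ_def scalar_prod_def row_def col_def intro!: sum.cong)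
  also have "\<dots> = d i" using i by (simp add: sum.delta)
  finally show "Rmat D m n z $$ (i, j)
      = mat m m (\<lambda>(i, j). (if i = j then z - d i else 0) + d i / of_nat n) $$ (i, j)"
    using i j by (simp add: Rmat_def D onesJ_def)
qed (auto simp: Rmat_def D onesJ_def)

lemma Rmat_diag_carrier:
  "D = mat m m (\<lambda>(i, j). if i = j then d i else 0) \<Longrightarrow> Rmat D m n z \<in> carrier_mat m m"
  by (simp add: Rmat_diag_eq)

lemma Rmat_diag_mult_vec_index:
  assumes D: "D = mat m m (\<lambda>(i, j). if i = j then d i else 0)"
    and y: "y \<in> carrier_vec m" and i: "i < m"
  shows "vec_index (Rmat D m n z *\<^sub>v y) i = (z - d i) * vec_index y i + d i / of_nat n * (\<Sum>k<m. vec_index y k)"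
proof -
  have "vec_index (Rmat D m n z *\<^sub>v y) i
        = (\<Sum>k<m. ((if i = k then z - d i else 0) + d i / of_nat n) * vec_index y k)"
    using i y by (simp add: Rmat_diag_eq[OF D] scalar_prod_def row_def lessThan_atLeast0)
  also have "\<dots> = (\<Sum>k<m. if i = k then (z - d i) * vec_index y k else 0) + (\<Sum>k<m. d i / of_nat n * vec_index y k)"
    by (subst sum.distrib[symmetric], rule sum.cong) (auto simp: distrib_right)
  also have "\<dots> = (z - d i) * vec_index y i + d i / of_nat n * (\<Sum>k<m. vec_index y k)"
    using i by (simp add: sum.delta sum_distrib_left)
  finally show ?thesis .
qed

text \<open>Solving \<open>R y = t D 1\<close> reduces to one scalar equation for the sum of the entries of \<open>y\<close>.\<close>
lemma Rmat_diag_solve: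
  fixes d :: "nat \<Rightarrow> complex"
  assumes D: "D = mat m m (\<lambda>(i, j). if i = j then d i else 0)"
    and dz: "\<And>i. i < m \<Longrightarrow> d i \<noteq> z" and n: "n > 0"
    and y: "y \<in> carrier_vec m" and Ry: "\<And>i. i < m \<Longrightarrow> vec_index (Rmat D m n z *\<^sub>v y) i = t * d i"
  defines "\<sigma> \<equiv> (\<Sum>k<m. vec_index y k) / of_nat n" and "w \<equiv> (\<Sum>i<m. d i / (z - d i)) / of_nat n"
  shows "\<And>i. i < m \<Longrightarrow> vec_index y i = d i * (t - \<sigma>) / (z - d i)" and "\<sigma> * (1 + w) = t * w"
proof -
  show yi: "vec_index y i = d i * (t - \<sigma>) / (z - d i)" if i: "i < m" for i
  proof -
    have "(z - d i) * vec_index y i + d i * \<sigma> = t * d i"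
      using Rmat_diag_mult_vec_index[OF D y i, of n z] Ry[OF i] by (simp add: \<sigma>_def)
    moreover have "z - d i \<noteq> 0" using dz[OF i] by simp
    ultimately show ?thesis by (simp add: field_simps)
  qed
  have "(\<Sum>k<m. vec_index y k) = (t - \<sigma>) * (\<Sum>i<m. d i / (z - d i))"
    by (simp add: yi sum_distrib_left mult.commute)
  then have "\<sigma> = (t - \<sigma>) * w"
    by (simp add: \<sigma>_def w_def)
  then show "\<sigma> * (1 + w) = t * w"
    by (simp add: algebra_simps)
qed

lemma Rmat_diag_mat_inverse:
  fixes d :: "nat \<Rightarrow> complex"
  assumes D: "D = mat m m (\<lambda>(i, j). if i = j then d i else 0)"
    and dz: "\<And>i. i < m \<Longrightarrow> d i \<noteq> z" and n: "n > 0"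
    and w: "1 + (\<Sum>i<m. d i / (z - d i)) / of_nat n \<noteq> 0"
  obtains B where "mat_inverse (Rmat D m n z) = Some B" and "B \<in> carrier_mat m m"
    and "Rmat D m n z * B = 1\<^sub>m m" and "B * Rmat D m n z = 1\<^sub>m m"
proof -
  let ?R = "Rmat D m n z"
  have Rc: "?R \<in> carrier_mat m m" by (rule Rmat_diag_carrier[OF D])
  have "v = 0\<^sub>v m" if v: "v \<in> carrier_vec m" and Rv: "?R *\<^sub>v v = 0\<^sub>v m" for v
  proof -
    have Rv0: "vec_index (?R *\<^sub>v v) i = 0 * d i" if "i < m" for i
      using Rv that by simp
    note solve = Rmat_diag_solve[OF D dz n v Rv0]
    have "(\<Sum>k<m. vec_index v k) / of_nat n = 0"
      using solve(2) w by simp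
    with solve(1) v show ?thesis by (intro eq_vecI) auto
  qed
  then have "det ?R \<noteq> 0"
    using det_0_iff_vec_prod_zero[OF Rc] by auto
  then have "?R \<in> Units (ring_mat TYPE(complex) m undefined)"
    by (rule det_non_zero_imp_unit[OF Rc])
  then have "mat_inverse ?R \<noteq> None"
    using mat_inverse(1)[OF Rc] by metis
  then obtain B where B: "mat_inverse ?R = Some B" by auto
  with mat_inverse(2)[OF Rc B] show ?thesis using that by auto
qed

text \<open>Sherman--Morrison for the diagonal matrix \<open>zI - D\<close> perturbed by the rank-one term \<open>n\<^sup>-\<^sup>1 D J\<close>.\<close>
lemma Rmat_diag_invertible_Ffun:
  fixes d :: "nat \<Rightarrow> complex"
  assumes D: "D = mat m m (\<lambda>(i, j). if i = j then d i else 0)"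
    and dz: "\<And>i. i < m \<Longrightarrow> d i \<noteq> z" and n: "n > 0"
  defines "w \<equiv> (\<Sum>i<m. d i / (z - d i)) / of_nat n"
  assumes w: "1 + w \<noteq> 0"
  shows "invertible_mat (Rmat D m n z)" and "Ffun D m n z = w / (1 + w)"
proof -
  let ?R = "Rmat D m n z"
  have Rc: "?R \<in> carrier_mat m m" by (rule Rmat_diag_carrier[OF D])
  obtain B where B: "mat_inverse ?R = Some B" and Bc: "B \<in> carrier_mat m m"
    and RB: "?R * B = 1\<^sub>m m" and BR: "B * ?R = 1\<^sub>m m"
    using Rmat_diag_mat_inverse[OF D dz n w[unfolded w_def]] .
  show "invertible_mat ?R"
    unfolding invertible_mat_def inverts_mat_def using Rc RB BR Bc by auto
  define y where "y = B *\<^sub>v (D *\<^sub>v onesv m)"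
  have D1c: "D *\<^sub>v onesv m \<in> carrier_vec m" unfolding carrier_vec_def by (simp add: D)
  have yc: "y \<in> carrier_vec m" unfolding y_def using Bc D1c by simp
  have Ry: "?R *\<^sub>v y = D *\<^sub>v onesv m"
    unfolding y_def using assoc_mult_mat_vec[OF Rc Bc D1c] RB D1c by simp
  have "vec_index (?R *\<^sub>v y) i = 1 * d i" if i: "i < m" for i
  proof -
    have "vec_index (D *\<^sub>v onesv m) i = (\<Sum>k = 0..<m. if i = k then d i else 0)"
      using i by (auto simp: D onesv_def scalar_prod_def row_def intro!: sum.cong)
    also have "\<dots> = d i" using i by (simp add: sum.delta)
    finally show ?thesis by (simp add: Ry)
  qed
  from Rmat_diag_solve(2)[OF D dz n yc this, folded w_def]
  have "(\<Sum>k<m. vec_index y k) / of_nat n = w / (1 + w)"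
    using w by (simp add: eq_divide_eq)
  moreover have "onesv m \<bullet> y = (\<Sum>k<m. vec_index y k)"
    using yc by (simp add: onesv_def scalar_prod_def lessThan_atLeast0)
  then have "Ffun D m n z = (\<Sum>k<m. vec_index y k) / of_nat n"
    by (simp add: Ffun_def B flip: y_def)
  ultimately show "Ffun D m n z = w / (1 + w)" by simp
qed

definition din_entry :: "(nat \<Rightarrow> complex) \<Rightarrow> (nat \<Rightarrow> complex) \<Rightarrow> nat \<Rightarrow> nat \<Rightarrow> nat \<Rightarrow> nat \<Rightarrow> complex" where
  "din_entry x \<xi> k s n i = (if i < n - k then x i else \<xi> (i - (n - k) + s + 1))"

lemma Din_eq_diag:
  "Din x \<xi> k s n = mat (n - s) (n - s) (\<lambda>(i, j). if i = j then din_entry x \<xi> k s n i else 0)"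
  unfolding Din_def din_entry_def by (rule refl)

subsection \<open>A strong law of large numbers for bounded functions\<close>

context prob_space
begin

lemma Hoeffding_iid_abs_ge:
  fixes X :: "nat \<Rightarrow> 'a \<Rightarrow> 'b::topological_space" and f :: "'b \<Rightarrow> real"
  assumes X: "\<And>i. X i \<in> borel_measurable M" and indep: "indep_vars (\<lambda>_. borel) X UNIV"
    and distr_X: "\<And>i. distr M borel (X i) = \<nu>"
    and f: "f \<in> borel_measurable borel" and bound: "\<And>x. \<bar>f x\<bar> \<le> b" and b: "b > 0"
    and \<delta>: "\<delta> \<ge> 0" and n: "n > 0"
  shows "prob {\<omega> \<in> space M. \<delta> \<le> \<bar>(\<Sum>i<n. f (X i \<omega>)) / real n - integral\<^sup>L \<nu> f\<bar>}
    \<le> 2 * exp (- real n * \<delta>\<^sup>2 / (2 * b\<^sup>2))"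
proof -
  have [measurable]: "X i \<in> borel_measurable M" for i by (rule X)
  note f[measurable]
  have f_bounds: "-b \<le> f x \<and> f x \<le> b" for x using bound[of x] by linarith
  interpret H: Hoeffding_ineq_iid M "{..<n}" "\<lambda>i \<omega>. f (X i \<omega>)" "\<lambda>\<omega>. f (X 0 \<omega>)" "-b" b
    "expectation (\<lambda>\<omega>. f (X 0 \<omega>))"
  proof unfold_locales
    show "indep_vars (\<lambda>_. borel) (\<lambda>i \<omega>. f (X i \<omega>)) {..<n}"
      by (rule indep_vars_compose2[OF indep_vars_subset[OF indep]]) auto
    fix i
    have "distr M borel (\<lambda>\<omega>. f (X i \<omega>)) = distr (distr M borel (X i)) borel f"
      by (subst distr_distr) (auto simp: comp_def)
    also have "\<dots> = distr (distr M borel (X 0)) borel f" by (simp add: distr_X)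
    also have "\<dots> = distr M borel (\<lambda>\<omega>. f (X 0 \<omega>))"
      by (subst distr_distr) (auto simp: comp_def)
    finally show "distr M borel (\<lambda>\<omega>. f (X i \<omega>)) = distr M borel (\<lambda>\<omega>. f (X 0 \<omega>))" .
  qed (use f_bounds in simp_all)
  have E: "expectation (\<lambda>\<omega>. f (X 0 \<omega>)) = integral\<^sup>L \<nu> f"
    using integral_distr[of "X 0" M borel f] distr_X by simp
  have "prob {\<omega> \<in> space M. \<delta> \<le> \<bar>(\<Sum>i\<in>{..<n}. f (X i \<omega>)) / real (card {..<n}) - integral\<^sup>L \<nu> f\<bar>}
      \<le> 2 * exp (-2 * real (card {..<n}) * \<delta>\<^sup>2 / (b - - b)\<^sup>2)"
    unfolding E[symmetric] by (rule H.Hoeffding_ineq_abs_ge'[OF \<delta>]) (use b n in auto)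
  moreover have "-2 * real (card {..<n}) * \<delta>\<^sup>2 / (b - - b)\<^sup>2 = - real n * \<delta>\<^sup>2 / (2 * b\<^sup>2)"
    by (simp add: power2_eq_square)
  ultimately show ?thesis by simp
qed

text \<open>The deviation probabilities are summable, so Borel--Cantelli applies.\<close>
lemma strong_law_bounded_eventually:
  fixes X :: "nat \<Rightarrow> 'a \<Rightarrow> 'b::topological_space" and f :: "'b \<Rightarrow> real"
  assumes X: "\<And>i. X i \<in> borel_measurable M" and indep: "indep_vars (\<lambda>_. borel) X UNIV"
    and distr_X: "\<And>i. distr M borel (X i) = \<nu>"
    and f: "f \<in> borel_measurable borel" and bound: "\<And>x. \<bar>f x\<bar> \<le> B" and \<delta>: "\<delta> > 0"
  shows "AE \<omega> in M. eventually (\<lambda>n. \<bar>(\<Sum>i<n. f (X i \<omega>)) / real n - integral\<^sup>L \<nu> f\<bar> < \<delta>) sequentially"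
proof -
  have [measurable]: "X i \<in> borel_measurable M" for i by (rule X)
  note f[measurable]
  define b where "b = B + 1"
  have b: "b > 0" using bound[of undefined] by (simp add: b_def)
  have bound_b: "\<bar>f x\<bar> \<le> b" for x using bound[of x] by (simp add: b_def)
  define A where "A n = {\<omega> \<in> space M. \<delta> \<le> \<bar>(\<Sum>i<Suc n. f (X i \<omega>)) / real (Suc n) - integral\<^sup>L \<nu> f\<bar>}" for n
  define q where "q = exp (- \<delta>\<^sup>2 / (2 * b\<^sup>2))"
  have q: "0 \<le> q" "q < 1" using \<delta> b by (auto simp: q_def)
  have prob_A: "measure M (A n) \<le> 2 * q ^ Suc n" for n
  proof -
    have "measure M (A n) \<le> 2 * exp (- real (Suc n) * \<delta>\<^sup>2 / (2 * b\<^sup>2))"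
      unfolding A_def by (rule Hoeffding_iid_abs_ge[OF X indep distr_X f bound_b b]) (use \<delta> in auto)
    also have "exp (- real (Suc n) * \<delta>\<^sup>2 / (2 * b\<^sup>2)) = q ^ Suc n"
      unfolding q_def exp_of_nat_mult[symmetric]
      by (simp only: times_divide_eq_right mult_minus_left mult_minus_right)
    finally show ?thesis .
  qed
  have "summable (\<lambda>n. 2 * q ^ Suc n)"
    using q by (intro summable_mult summable_Suc_iff[THEN iffD2] summable_geometric) auto
  then have "summable (\<lambda>n. measure M (A n))"
    by (rule summable_comparison_test'[where N = 0]) (use prob_A in simp)
  moreover have "A n \<in> sets M" for n unfolding A_def by measurable
  ultimately have "AE \<omega> in M. eventually (\<lambda>n. \<omega> \<in> space M - A n) sequentially"
    by (intro borel_cantelli_AE1) (simp_all add: emeasure_eq_measure)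
  then show ?thesis
  proof eventually_elim
    case (elim \<omega>)
    then obtain N where N: "\<And>n. n \<ge> N \<Longrightarrow> \<omega> \<in> space M - A n"
      by (auto simp: eventually_sequentially)
    have "\<bar>(\<Sum>i<Suc n. f (X i \<omega>)) / real (Suc n) - integral\<^sup>L \<nu> f\<bar> < \<delta>" if "n \<ge> N" for n
      using N[OF that] by (auto simp: A_def not_le)
    then show ?case
      unfolding eventually_sequentially by (metis Suc_le_D Suc_le_mono)
  qed
qed

lemma strong_law_bounded:
  fixes X :: "nat \<Rightarrow> 'a \<Rightarrow> 'b::topological_space" and f :: "'b \<Rightarrow> real"
  assumes X: "\<And>i. X i \<in> borel_measurable M" and indep: "indep_vars (\<lambda>_. borel) X UNIV"
    and distr_X: "\<And>i. distr M borel (X i) = \<nu>"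
    and f: "f \<in> borel_measurable borel" and bound: "\<And>x. \<bar>f x\<bar> \<le> B"
  shows "AE \<omega> in M. (\<lambda>n. (\<Sum>i<n. f (X i \<omega>)) / real n) \<longlonglongrightarrow> integral\<^sup>L \<nu> f"
proof -
  have "AE \<omega> in M. \<forall>m. eventually
      (\<lambda>n. \<bar>(\<Sum>i<n. f (X i \<omega>)) / real n - integral\<^sup>L \<nu> f\<bar> < inverse (real (Suc m))) sequentially"
    unfolding AE_all_countable
    by (intro allI strong_law_bounded_eventually[OF X indep distr_X f bound]) simp
  then show ?thesis
  proof eventually_elim
    case (elim \<omega>)
    show ?case
    proof (rule LIMSEQ_I)
      fix r :: real assume "r > 0"
      then obtain m where "inverse (real (Suc m)) < r"
        using reals_Archimedean by blast
      with elim[rule_format, of m]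
      have "eventually (\<lambda>n. norm ((\<Sum>i<n. f (X i \<omega>)) / real n - integral\<^sup>L \<nu> f) < r) sequentially"
        by (auto elim: eventually_mono)
      then show "\<exists>no. \<forall>n\<ge>no. norm ((\<Sum>i<n. f (X i \<omega>)) / real n - integral\<^sup>L \<nu> f) < r"
        by (simp add: eventually_sequentially)
    qed
  qed
qed

lemma strong_law_bounded_complex:
  fixes X :: "nat \<Rightarrow> 'a \<Rightarrow> 'b::topological_space" and f :: "'b \<Rightarrow> complex"
  assumes X: "\<And>i. X i \<in> borel_measurable M" and indep: "indep_vars (\<lambda>_. borel) X UNIV"
    and distr_X: "\<And>i. distr M borel (X i) = \<nu>"
    and f: "f \<in> borel_measurable borel" and bound: "\<And>x. norm (f x) \<le> B"
  shows "AE \<omega> in M. (\<lambda>n. (\<Sum>i<n. f (X i \<omega>)) / of_nat n) \<longlonglongrightarrow> integral\<^sup>L \<nu> f"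
proof -
  have "prob_space \<nu>"
    using prob_space_distr[OF X] distr_X by metis
  then have f_int: "integrable \<nu> f"
    using f bound distr_X[of 0]
    by (intro finite_measure.integrable_const_bound[where B = B])
       (auto simp: prob_space_def intro: measurable_cong_sets)
  have "AE \<omega> in M. (\<lambda>n. (\<Sum>i<n. Re (f (X i \<omega>))) / real n) \<longlonglongrightarrow> integral\<^sup>L \<nu> (\<lambda>x. Re (f x))"
    by (rule strong_law_bounded[OF X indep distr_X, where B = B])
       (use f abs_Re_le_cmod[of "f _"] bound in \<open>auto intro: order_trans\<close>)
  moreover have "AE \<omega> in M. (\<lambda>n. (\<Sum>i<n. Im (f (X i \<omega>))) / real n) \<longlonglongrightarrow> integral\<^sup>L \<nu> (\<lambda>x. Im (f x))"
    by (rule strong_law_bounded[OF X indep distr_X, where B = B])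
       (use f abs_Im_le_cmod[of "f _"] bound in \<open>auto intro: order_trans\<close>)
  ultimately show ?thesis
    by eventually_elim (simp add: f_int tendsto_complex_iff Re_divide_of_nat Im_divide_of_nat Re_sum Im_sum)
qed

lemma norm_integral_le_const:
  fixes f :: "'a \<Rightarrow> 'b::{banach, second_countable_topology}"
  assumes "integrable M f" and "AE x in M. norm (f x) \<le> B"
  shows "norm (integral\<^sup>L M f) \<le> B"
proof -
  have "norm (integral\<^sup>L M f) \<le> integral\<^sup>L M (\<lambda>x. norm (f x))" by (rule integral_norm_bound)
  also have "\<dots> \<le> B" using assms by (intro integral_le_const) auto
  finally show ?thesis .
qed

end

lemma norm_div_diff_le:
  fixes x z :: complex
  assumes "e \<le> dist z x" and "e > 0" and "norm x \<le> r"
  shows "norm (z / (z - x)) \<le> 1 + r / e"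
proof -
  have d: "e \<le> norm (z - x)" using assms by (simp add: dist_norm)
  then have "z - x \<noteq> 0" using assms(2) by auto
  then have "z / (z - x) = 1 + x / (z - x)" by (simp add: field_simps)
  moreover have "norm x / norm (z - x) \<le> r / e"
    using d assms norm_ge_zero[of x] by (intro frac_le) linarith+
  ultimately show ?thesis
    using norm_triangle_ineq[of 1 "x / (z - x)"] by (simp add: norm_divide)
qed

lemma norm_div_diff_sub_le:
  fixes x z w :: complex
  assumes "e \<le> dist z x" and "e \<le> dist w x" and "e > 0"
  shows "norm (z / (z - x) - w / (w - x)) \<le> norm x / e\<^sup>2 * norm (z - w)"
proof -
  have dz: "e \<le> norm (z - x)" and dw: "e \<le> norm (w - x)" using assms by (simp_all add: dist_norm)
  then have "z - x \<noteq> 0" "w - x \<noteq> 0" using assms(3) by auto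
  then have "z / (z - x) - w / (w - x) = x * (w - z) / ((z - x) * (w - x))"
    by (simp add: field_simps)
  then have "norm (z / (z - x) - w / (w - x)) = norm x * norm (z - w) / (norm (z - x) * norm (w - x))"
    by (simp add: norm_mult norm_divide norm_minus_commute)
  also have "\<dots> \<le> norm x * norm (z - w) / (e * e)"
    using dz dw assms(3) by (intro frac_le mult_mono) auto
  finally show ?thesis by (simp add: power2_eq_square)
qed

lemma Re_div_diff_ge_half:
  fixes x z :: complex
  assumes "2 * norm x \<le> norm (z - x)" and "z \<noteq> x"
  shows "1/2 \<le> Re (z / (z - x))"
proof -
  have "z / (z - x) = 1 + x / (z - x)" using assms(2) by (simp add: field_simps)
  moreover have "norm (x / (z - x)) \<le> 1/2"
    using assms by (simp add: norm_divide divide_le_eq)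
  ultimately show ?thesis
    using abs_Re_le_cmod[of "x / (z - x)"] by simp
qed

lemma norm_div_one_plus_le:
  fixes w :: complex
  assumes "0 < a" and "a \<le> norm (1 + w)"
  shows "norm (w / (1 + w)) \<le> 1 + 1 / a"
proof -
  have pos: "norm (1 + w) > 0" using assms by linarith
  have "norm (w / (1 + w)) \<le> (norm (1 + w) + 1) / norm (1 + w)"
    using pos norm_triangle_ineq4[of "1 + w" 1] by (simp add: norm_divide divide_right_mono)
  also have "\<dots> = 1 + 1 / norm (1 + w)" using pos by (simp add: field_simps)
  also have "\<dots> \<le> 1 + 1 / a" using assms by (simp add: frac_le)
  finally show ?thesis .
qed

lemma norm_sum_atLeastLessThan_le:
  fixes f :: "nat \<Rightarrow> 'a::real_normed_vector"
  assumes "\<And>i. a \<le> i \<Longrightarrow> i < b \<Longrightarrow> norm (f i) \<le> B" and "b - a \<le> K" and "0 \<le> B"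
  shows "norm (sum f {a..<b}) \<le> K * B"
proof -
  have "norm (sum f {a..<b}) \<le> (\<Sum>i\<in>{a..<b}. B)"
    using assms(1) by (intro sum_norm_le) auto
  also have "\<dots> \<le> K * B" using assms(2,3) by (simp add: mult_right_mono)
  finally show ?thesis .
qed

lemma sum_lessThan_split_at:
  "a \<le> b \<Longrightarrow> sum f {..<b} = sum f {..<a} + sum f {a..<(b::nat)}"
  by (simp add: lessThan_atLeast0 sum.atLeastLessThan_concat)

subsection \<open>The transform \<open>z m\<^sub>\<mu>(z)\<close> of a compactly supported measure\<close>

lemma AE_in_msupp:
  assumes "sets \<mu> = sets borel"
  shows "AE x in \<mu>. x \<in> msupp \<mu>"
proof -
  obtain \<B> :: "complex set set" where \<B>: "countable \<B>" "\<And>C. C \<in> \<B> \<Longrightarrow> open C"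
    "\<And>S. open S \<Longrightarrow> \<exists>U. U \<subseteq> \<B> \<and> S = \<Union>U"
    by (rule univ_second_countable) blast
  define N where "N = (\<Union>b\<in>{b\<in>\<B>. emeasure \<mu> b = 0}. b)"
  have "N \<in> null_sets \<mu>"
    unfolding N_def using \<B>(1,2) assms by (intro null_sets_UN') (auto simp: null_sets_def)
  moreover have "{x \<in> space \<mu>. x \<notin> msupp \<mu>} \<subseteq> N"
  proof
    fix x assume "x \<in> {x \<in> space \<mu>. x \<notin> msupp \<mu>}"
    then obtain e where e: "e > 0" "emeasure \<mu> (ball x e) = 0" by (auto simp: msupp_def not_gr_zero)
    obtain U where U: "U \<subseteq> \<B>" "ball x e = \<Union>U" using \<B>(3)[of "ball x e"] by auto
    then obtain b where b: "b \<in> U" "x \<in> b" using e(1) by (metis UnionE centre_in_ball)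
    have "b \<subseteq> ball x e" using U b by auto
    then have "emeasure \<mu> b \<le> emeasure \<mu> (ball x e)"
      using U(1) b(1) \<B>(2) assms by (intro emeasure_mono) auto
    then have "emeasure \<mu> b = 0" using e(2) by simp
    then show "x \<in> N" unfolding N_def using U b by auto
  qed
  ultimately show ?thesis by (rule AE_I')
qed

locale compactly_supported_prob =
  fixes \<mu> :: "complex measure"
  assumes prob_space: "prob_space \<mu>" and sets_eq_borel: "sets \<mu> = sets borel"
    and compact_msupp: "compact (msupp \<mu>)" and zero_in_msupp: "0 \<in> msupp \<mu>"
begin

abbreviation "S \<equiv> msupp \<mu>"

lemma closed_msupp: "closed S"
  using compact_msupp compact_imp_closed by blast

definition supp_radius :: real where
  "supp_radius = max 1 (Sup (norm ` S))"

lemma supp_radius_ge_1: "supp_radius \<ge> 1"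
  by (simp add: supp_radius_def)

lemma norm_le_supp_radius: "x \<in> S \<Longrightarrow> norm x \<le> supp_radius"
  using compact_imp_bounded[OF compact_msupp]
  by (auto simp: supp_radius_def bounded_iff bdd_above_def intro!: cSup_upper max.coboundedI2)

definition apart_supp :: "real \<Rightarrow> complex \<Rightarrow> bool" where
  "apart_supp e z \<longleftrightarrow> (\<forall>x\<in>S. e \<le> dist z x)"

text \<open>The kernel is cut off outside the support so that it is bounded on all of \<open>\<complex>\<close>,
  as the strong law of large numbers requires.\<close>
definition zkernel :: "complex \<Rightarrow> complex \<Rightarrow> complex" where
  "zkernel z x = (if x \<in> S then z / (z - x) else 0)"

definition zstieltjes :: "complex \<Rightarrow> complex" where
  "zstieltjes z = integral\<^sup>L \<mu> (zkernel z)"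

lemma zkernel_borel: "zkernel z \<in> borel_measurable borel"
proof -
  have [measurable]: "S \<in> sets borel" using closed_msupp by simp
  show ?thesis unfolding zkernel_def by measurable
qed

lemma norm_zkernel_le:
  assumes "apart_supp e z" and "e > 0"
  shows "norm (zkernel z x) \<le> 1 + supp_radius / e"
  using assms norm_div_diff_le[of e z x supp_radius] norm_le_supp_radius supp_radius_ge_1
  by (auto simp: zkernel_def apart_supp_def)

lemma integrable_zkernel:
  assumes "apart_supp e z" and "e > 0"
  shows "integrable \<mu> (zkernel z)"
  using prob_space zkernel_borel norm_zkernel_le[OF assms] sets_eq_borel
  by (intro finite_measure.integrable_const_bound[where B = "1 + supp_radius / e"])
     (auto simp: prob_space_def intro: measurable_cong_sets)

lemma zstieltjes_eq: "zstieltjes z = z * stieltjes \<mu> z"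
proof -
  have "zstieltjes z = integral\<^sup>L \<mu> (\<lambda>x. z * (1 / (z - x)))"
    unfolding zstieltjes_def
    by (rule integral_cong_AE) (use AE_in_msupp[OF sets_eq_borel] zkernel_borel sets_eq_borel in
        \<open>auto simp: zkernel_def intro: measurable_cong_sets AE_mp\<close>)
  then show ?thesis unfolding stieltjes_def by (simp only: integral_mult_right_zero)
qed

lemma zstieltjes_lipschitz:
  assumes "apart_supp e z" and "apart_supp e w" and "e > 0"
  shows "norm (zstieltjes z - zstieltjes w) \<le> supp_radius / e\<^sup>2 * norm (z - w)"
proof -
  have "zstieltjes z - zstieltjes w = integral\<^sup>L \<mu> (\<lambda>x. zkernel z x - zkernel w x)"
    unfolding zstieltjes_def using integrable_zkernel assms by simp
  also have "norm \<dots> \<le> supp_radius / e\<^sup>2 * norm (z - w)"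
  proof (rule prob_space.norm_integral_le_const[OF prob_space])
    show "integrable \<mu> (\<lambda>x. zkernel z x - zkernel w x)" using integrable_zkernel assms by auto
    have "norm (zkernel z x - zkernel w x) \<le> supp_radius / e\<^sup>2 * norm (z - w)" for x
    proof (cases "x \<in> S")
      case True
      then have "norm (zkernel z x - zkernel w x) \<le> norm x / e\<^sup>2 * norm (z - w)"
        using norm_div_diff_sub_le[of e z x w] assms by (simp add: zkernel_def apart_supp_def)
      also have "\<dots> \<le> supp_radius / e\<^sup>2 * norm (z - w)"
        using norm_le_supp_radius[OF True] by (intro mult_right_mono divide_right_mono) auto
      finally show ?thesis .
    qed (use supp_radius_ge_1 in \<open>simp add: zkernel_def\<close>)
    then show "AE x in \<mu>. norm (zkernel z x - zkernel w x) \<le> supp_radius / e\<^sup>2 * norm (z - w)"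
      by simp
  qed
  finally show ?thesis .
qed

lemma apart_supp_of_norm_ge:
  assumes "3 * supp_radius \<le> norm z"
  shows "apart_supp (2 * supp_radius) z"
  unfolding apart_supp_def dist_norm
proof
  fix x assume "x \<in> S"
  then show "2 * supp_radius \<le> norm (z - x)"
    using assms norm_le_supp_radius norm_triangle_ineq2[of z x] by fastforce
qed

lemma Re_div_diff_ge_half_of_norm_ge:
  assumes "3 * supp_radius \<le> norm z" and "x \<in> S"
  shows "1/2 \<le> Re (z / (z - x))"
proof (rule Re_div_diff_ge_half)
  show "2 * norm x \<le> norm (z - x)"
    using apart_supp_of_norm_ge[OF assms(1)] assms(2) norm_le_supp_radius[OF assms(2)]
    by (fastforce simp: apart_supp_def dist_norm)
  then show "z \<noteq> x"
    using assms supp_radius_ge_1 by auto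
qed

lemma Re_zstieltjes_ge_half:
  assumes "3 * supp_radius \<le> norm z"
  shows "1/2 \<le> Re (zstieltjes z)"
proof -
  from AE_in_msupp[OF sets_eq_borel] have "AE x in \<mu>. 1/2 \<le> Re (zkernel z x)"
    by eventually_elim (use Re_div_diff_ge_half_of_norm_ge[OF assms] in \<open>simp add: zkernel_def\<close>)
  moreover have int: "integrable \<mu> (zkernel z)"
    using integrable_zkernel[OF apart_supp_of_norm_ge[OF assms]] supp_radius_ge_1 by simp
  ultimately have "1/2 \<le> integral\<^sup>L \<mu> (\<lambda>x. Re (zkernel z x))"
    by (intro prob_space.integral_ge_const[OF prob_space]) auto
  then show ?thesis
    unfolding zstieltjes_def using int by simp
qed

lemma norm_Mset_less:
  assumes "z \<in> Mset \<mu>"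
  shows "norm z < 3 * supp_radius"
proof (rule ccontr)
  assume "\<not> ?thesis"
  then have "1/2 \<le> Re (zstieltjes z)" by (intro Re_zstieltjes_ge_half) simp
  with assms show False by (simp add: zstieltjes_eq Mset_def)
qed

lemma dist_ge_of_notin_Nbhd:
  assumes "z \<notin> Nbhd \<mu> e" and "a \<in> S \<union> Mset \<mu>"
  shows "e \<le> dist z a"
  using assms infdist_le[of a "S \<union> Mset \<mu>" z] by (simp add: Nbhd_def)

lemma apart_supp_of_notin_Nbhd: "z \<notin> Nbhd \<mu> e \<Longrightarrow> apart_supp e z"
  using dist_ge_of_notin_Nbhd by (auto simp: apart_supp_def)

lemma dist_ge_of_notin_Nbhd_double:
  assumes "z \<notin> Nbhd \<mu> (2 * e)" and "y \<in> Nbhd \<mu> e"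
  shows "e \<le> dist z y"
  using assms infdist_triangle[of z "S \<union> Mset \<mu>" y] by (simp add: Nbhd_def)

lemma norm_le_of_in_Nbhd:
  assumes "y \<in> Nbhd \<mu> e"
  shows "norm y \<le> 3 * supp_radius + e"
proof -
  have ne: "S \<union> Mset \<mu> \<noteq> {}" using zero_in_msupp by auto
  with assms have "Inf (dist y ` (S \<union> Mset \<mu>)) < e" by (simp add: Nbhd_def infdist_notempty)
  then obtain a where a: "a \<in> S \<union> Mset \<mu>" "dist y a < e"
    using cInf_lessD[of "dist y ` (S \<union> Mset \<mu>)" e] ne by blast
  have "norm a \<le> 3 * supp_radius"
    using a(1) norm_le_supp_radius[of a] norm_Mset_less[of a] supp_radius_ge_1 by force
  then show ?thesis using a(2) norm_triangle_ineq2[of y a] by (simp add: dist_norm)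
qed

lemma open_Nbhd: "open (Nbhd \<mu> e)"
  unfolding Nbhd_def by (intro open_Collect_less continuous_intros)

lemma zstieltjes_nonzero_of_notin_Nbhd:
  assumes "z \<notin> Nbhd \<mu> e" and "e > 0"
  shows "zstieltjes z \<noteq> 0"
proof -
  have "z \<noteq> 0" "z \<notin> S" "z \<notin> Mset \<mu>"
    using dist_ge_of_notin_Nbhd[OF assms(1), of 0] dist_ge_of_notin_Nbhd[OF assms(1), of z]
      zero_in_msupp assms(2) by auto
  then show ?thesis by (simp add: zstieltjes_eq Mset_def)
qed

lemma zstieltjes_bounded_below:
  assumes "e > 0"
  obtains c where "0 < c" "c \<le> 1/2" "\<And>z. z \<notin> Nbhd \<mu> e \<Longrightarrow> c \<le> norm (zstieltjes z)"
proof -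
  define K where "K = - Nbhd \<mu> e \<inter> cball 0 (3 * supp_radius)"
  have "compact K" unfolding K_def
    by (intro closed_Int_compact closed_Compl open_Nbhd compact_cball)
  obtain c where c: "0 < c" "c \<le> 1/2" "\<And>z. z \<in> K \<Longrightarrow> c \<le> norm (zstieltjes z)"
  proof (cases "K = {}")
    case False
    have "continuous_on K zstieltjes"
      using zstieltjes_lipschitz[OF apart_supp_of_notin_Nbhd apart_supp_of_notin_Nbhd assms]
        supp_radius_ge_1 by (intro lipschitz_on_continuous_on[of "supp_radius / e\<^sup>2"])
         (auto simp: K_def lipschitz_on_def dist_norm)
    then obtain z0 where z0: "z0 \<in> K" "\<And>z. z \<in> K \<Longrightarrow> norm (zstieltjes z0) \<le> norm (zstieltjes z)"
      using continuous_attains_inf[OF \<open>compact K\<close> False, of "\<lambda>z. norm (zstieltjes z)"]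
        continuous_on_norm by blast
    have "zstieltjes z0 \<noteq> 0"
      using z0(1) zstieltjes_nonzero_of_notin_Nbhd assms by (auto simp: K_def)
    then show ?thesis
      using z0(2) by (intro that[of "min (1/2) (norm (zstieltjes z0))"]) (auto intro: min.coboundedI2)
  qed (use that[of "1/2"] in auto)
  show ?thesis
  proof (rule that[OF c(1,2)])
    fix z assume z: "z \<notin> Nbhd \<mu> e"
    show "c \<le> norm (zstieltjes z)"
    proof (cases "norm z \<le> 3 * supp_radius")
      case False
      then have "1/2 \<le> Re (zstieltjes z)" by (intro Re_zstieltjes_ge_half) simp
      then show ?thesis using c(2) complex_Re_le_cmod[of "zstieltjes z"] by linarith
    qed (use z c(3) in \<open>auto simp: K_def\<close>)
  qed
qed

end

subsection \<open>Empirical transforms\<close>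

definition empirical_zstieltjes :: "(nat \<Rightarrow> complex) \<Rightarrow> nat \<Rightarrow> complex \<Rightarrow> complex" where
  "empirical_zstieltjes x n z = (\<Sum>i<n. z / (z - x i)) / of_nat n"

lemma din_weight_eq:
  fixes x \<xi> :: "nat \<Rightarrow> complex"
  assumes sk: "s \<le> k" and kn: "k \<le> n" and n: "n > 0"
    and dz: "\<And>i. i < n - s \<Longrightarrow> din_entry x \<xi> k s n i \<noteq> z"
  defines "d \<equiv> din_entry x \<xi> k s n"
  shows "of_nat n * (1 + (\<Sum>i<n - s. d i / (z - d i)) / of_nat n - empirical_zstieltjes x n z)
    = of_nat s + ((\<Sum>i\<in>{n-k..<n-s}. z / (z - d i)) - (\<Sum>i\<in>{n-k..<n}. z / (z - x i)))"
proof -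
  have "d i / (z - d i) = z / (z - d i) - 1" if "i < n - s" for i
    using dz[OF that, folded d_def] by (simp add: field_simps)
  then have "(\<Sum>i<n - s. d i / (z - d i)) = (\<Sum>i<n - s. z / (z - d i)) - of_nat (n - s)"
    by (simp add: sum_subtractf)
  then have n_w: "of_nat n * (1 + (\<Sum>i<n - s. d i / (z - d i)) / of_nat n)
      = of_nat s + (\<Sum>i<n - s. z / (z - d i))"
    using n sk kn by (simp add: field_simps of_nat_diff)
  have "(\<Sum>i<n - k. z / (z - d i)) = (\<Sum>i<n - k. z / (z - x i))"
    by (intro sum.cong) (auto simp: d_def din_entry_def)
  then have split_d: "(\<Sum>i<n - s. z / (z - d i))
      = (\<Sum>i<n - k. z / (z - x i)) + (\<Sum>i\<in>{n-k..<n-s}. z / (z - d i))"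
    using sk by (simp add: sum_lessThan_split_at[of "n - k" "n - s"])
  have split_x: "(\<Sum>i<n. z / (z - x i)) = (\<Sum>i<n - k. z / (z - x i)) + (\<Sum>i\<in>{n-k..<n}. z / (z - x i))"
    by (simp add: sum_lessThan_split_at)
  show ?thesis
    using n by (simp add: n_w split_d split_x empirical_zstieltjes_def right_diff_distrib)
qed

context compactly_supported_prob
begin

lemma Re_empirical_zstieltjes_ge_half:
  assumes "3 * supp_radius \<le> norm z" and "\<And>i. x i \<in> S" and "n > 0"
  shows "1/2 \<le> Re (empirical_zstieltjes x n z)"
proof -
  have "(\<Sum>i<n. 1/2) \<le> (\<Sum>i<n. Re (z / (z - x i)))"
    using Re_div_diff_ge_half_of_norm_ge[OF assms(1) assms(2)] by (intro sum_mono)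
  then show ?thesis
    using assms(3) by (simp add: empirical_zstieltjes_def Re_sum field_simps)
qed

lemma empirical_zstieltjes_lipschitz:
  assumes "apart_supp e z" and "apart_supp e w" and "e > 0" and "\<And>i. x i \<in> S" and "n > 0"
  shows "norm (empirical_zstieltjes x n z - empirical_zstieltjes x n w)
    \<le> supp_radius / e\<^sup>2 * norm (z - w)"
proof -
  have "norm (z / (z - x i) - w / (w - x i)) \<le> supp_radius / e\<^sup>2 * norm (z - w)" for i
    using norm_div_diff_sub_le[of e z "x i" w] norm_le_supp_radius[OF assms(4)] assms(1-4)
    by (fastforce simp: apart_supp_def intro: order_trans mult_right_mono divide_right_mono)
  then have "norm (\<Sum>i<n. z / (z - x i) - w / (w - x i)) \<le> (\<Sum>i<n. supp_radius / e\<^sup>2 * norm (z - w))"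
    by (intro sum_norm_le)
  then show ?thesis
    using assms(5) by (simp add: empirical_zstieltjes_def sum_subtractf diff_divide_distrib[symmetric]
        norm_divide field_simps)
qed

text \<open>Near the net the bound follows from equicontinuity of the empirical transforms, far out from
  their real part being at least \<open>1/2\<close>.\<close>
lemma empirical_zstieltjes_bounded_below_of_net:
  assumes e: "e > 0" and c: "0 < c" "c \<le> 1/2" and n: "n > 0" and x: "\<And>i. x i \<in> S"
    and net: "\<And>w. w \<in> Z \<Longrightarrow> w \<notin> Nbhd \<mu> e \<and> c \<le> norm (zstieltjes w)
                  \<and> norm (empirical_zstieltjes x n w - zstieltjes w) < c / 8"
    and cover: "\<And>z. z \<notin> Nbhd \<mu> e \<Longrightarrow> norm z \<le> 3 * supp_radius \<Longrightarrow> \<exists>w\<in>Z. dist z w < r"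
    and r: "supp_radius / e\<^sup>2 * r \<le> c / 8"
    and z: "z \<notin> Nbhd \<mu> e"
  shows "3 * c / 4 \<le> norm (empirical_zstieltjes x n z)"
proof (cases "3 * supp_radius \<le> norm z")
  case True
  have "1/2 \<le> Re (empirical_zstieltjes x n z)"
    by (rule Re_empirical_zstieltjes_ge_half[OF True x n])
  with c show ?thesis
    using complex_Re_le_cmod[of "empirical_zstieltjes x n z"] by linarith
next
  case False
  let ?E = "empirical_zstieltjes x n"
  have "norm z \<le> 3 * supp_radius" using False by simp
  then obtain w where w: "w \<in> Z" "dist z w < r"
    using cover[OF z] by blast
  from net[OF w(1)] have w_out: "w \<notin> Nbhd \<mu> e" and w_lower: "c \<le> norm (zstieltjes w)"
    and w_close: "norm (?E w - zstieltjes w) < c / 8" by auto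
  have "norm (?E z - ?E w) \<le> supp_radius / e\<^sup>2 * norm (z - w)"
    by (rule empirical_zstieltjes_lipschitz[OF apart_supp_of_notin_Nbhd[OF z]
        apart_supp_of_notin_Nbhd[OF w_out] e x n])
  also have "\<dots> \<le> supp_radius / e\<^sup>2 * r"
    using w(2) supp_radius_ge_1 by (intro mult_left_mono) (simp_all add: dist_norm)
  finally have "norm (?E z - ?E w) \<le> c / 8" using r by linarith
  moreover have "zstieltjes w = ?E z - (?E z - ?E w) - (?E w - zstieltjes w)"
    by simp
  then have "norm (zstieltjes w) \<le> norm (?E z) + norm (?E z - ?E w) + norm (?E w - zstieltjes w)"
    by (metis norm_triangle_ineq4 add_right_mono order_trans)
  ultimately show ?thesis using w_lower w_close by linarith
qed

lemma AE_iid_in_msupp: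
  fixes X :: "nat \<Rightarrow> 'w \<Rightarrow> complex"
  assumes X: "\<And>i. X i \<in> borel_measurable P" and distr_X: "\<And>i. distr P borel (X i) = \<mu>"
  shows "AE \<omega> in P. \<forall>i. X i \<omega> \<in> S"
proof -
  have "AE \<omega> in P. X i \<omega> \<in> S" for i
  proof -
    have "AE x in distr P borel (X i). x \<in> S"
      unfolding distr_X by (rule AE_in_msupp[OF sets_eq_borel])
    then show ?thesis
      using closed_msupp X by (subst (asm) AE_distr_iff) auto
  qed
  then show ?thesis by (simp add: AE_all_countable)
qed

lemma AE_empirical_zstieltjes_tendsto:
  assumes P: "prob_space P" and X: "\<And>i. X i \<in> borel_measurable P"
    and indep: "prob_space.indep_vars P (\<lambda>_. borel) X UNIV"
    and distr_X: "\<And>i. distr P borel (X i) = \<mu>" and z: "apart_supp e z" and e: "e > 0"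
  shows "AE \<omega> in P. (\<lambda>n. empirical_zstieltjes (\<lambda>i. X i \<omega>) n z) \<longlonglongrightarrow> zstieltjes z"
proof -
  have "AE \<omega> in P. (\<lambda>n. (\<Sum>i<n. zkernel z (X i \<omega>)) / of_nat n) \<longlonglongrightarrow> zstieltjes z"
    unfolding zstieltjes_def
    by (rule prob_space.strong_law_bounded_complex[OF P X indep distr_X zkernel_borel
          norm_zkernel_le[OF z e]])
  with AE_iid_in_msupp[of X P, OF X distr_X] show ?thesis
    by eventually_elim (simp add: empirical_zstieltjes_def zkernel_def)
qed

lemma finite_net_outside_Nbhd:
  assumes "r > 0"
  obtains Z where "finite Z" and "Z \<inter> Nbhd \<mu> e = {}"
    and "\<And>z. z \<notin> Nbhd \<mu> e \<Longrightarrow> norm z \<le> 3 * supp_radius \<Longrightarrow> \<exists>w\<in>Z. dist z w < r"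
proof -
  define K where "K = - Nbhd \<mu> e \<inter> cball 0 (3 * supp_radius)"
  have "compact K" unfolding K_def
    by (intro closed_Int_compact closed_Compl open_Nbhd compact_cball)
  from assms seq_compact_imp_totally_bounded[OF compact_imp_seq_compact[OF this]]
  obtain Z where Z: "Z \<subseteq> K" "finite Z" "K \<subseteq> (\<Union>w\<in>Z. ball w r)"
    by meson
  show ?thesis
  proof (rule that[OF Z(2)])
    show "Z \<inter> Nbhd \<mu> e = {}" using Z(1) by (auto simp: K_def)
    fix z assume "z \<notin> Nbhd \<mu> e" "norm z \<le> 3 * supp_radius"
    then have "z \<in> K" by (simp add: K_def)
    with Z(3) obtain w where "w \<in> Z" "z \<in> ball w r" by blast
    then show "\<exists>w\<in>Z. dist z w < r" by (auto simp: dist_commute)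
  qed
qed

lemma AE_empirical_zstieltjes_bounded_below:
  assumes P: "prob_space P" and X: "\<And>i. X i \<in> borel_measurable P"
    and indep: "prob_space.indep_vars P (\<lambda>_. borel) X UNIV"
    and distr_X: "\<And>i. distr P borel (X i) = \<mu>" and e: "e > 0"
  obtains c where "c > 0" and "AE \<omega> in P. eventually (\<lambda>n.
    \<forall>z. z \<notin> Nbhd \<mu> e \<longrightarrow> c \<le> norm (empirical_zstieltjes (\<lambda>i. X i \<omega>) n z)) sequentially"
proof -
  obtain c where c: "0 < c" "c \<le> 1/2" "\<And>z. z \<notin> Nbhd \<mu> e \<Longrightarrow> c \<le> norm (zstieltjes z)"
    using zstieltjes_bounded_below[OF e] by blast
  define r where "r = c / 8 / (supp_radius / e\<^sup>2)"
  have r: "r > 0" "supp_radius / e\<^sup>2 * r \<le> c / 8"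
    using c(1) e supp_radius_ge_1 by (simp_all add: r_def)
  obtain Z where Z: "finite Z" "Z \<inter> Nbhd \<mu> e = {}"
    and cover: "\<And>z. z \<notin> Nbhd \<mu> e \<Longrightarrow> norm z \<le> 3 * supp_radius \<Longrightarrow> \<exists>w\<in>Z. dist z w < r"
    using finite_net_outside_Nbhd[OF r(1)] by blast
  have "AE \<omega> in P. \<forall>w\<in>Z. (\<lambda>n. empirical_zstieltjes (\<lambda>i. X i \<omega>) n w) \<longlonglongrightarrow> zstieltjes w"
  proof (rule AE_finite_allI[OF Z(1)])
    fix w assume "w \<in> Z"
    then have "w \<notin> Nbhd \<mu> e" using Z(2) by auto
    then show "AE \<omega> in P. (\<lambda>n. empirical_zstieltjes (\<lambda>i. X i \<omega>) n w) \<longlonglongrightarrow> zstieltjes w"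
      by (rule AE_empirical_zstieltjes_tendsto[OF P X indep distr_X apart_supp_of_notin_Nbhd e])
  qed
  with AE_iid_in_msupp[of X P, OF X distr_X] have "AE \<omega> in P. eventually (\<lambda>n.
    \<forall>z. z \<notin> Nbhd \<mu> e \<longrightarrow> 3 * c / 4 \<le> norm (empirical_zstieltjes (\<lambda>i. X i \<omega>) n z)) sequentially"
  proof eventually_elim
    case (elim \<omega>)
    have "eventually (\<lambda>n. \<forall>w\<in>Z. dist (empirical_zstieltjes (\<lambda>i. X i \<omega>) n w) (zstieltjes w) < c / 8)
      sequentially"
      using elim(2) c(1) by (intro eventually_ball_finite Z(1) ballI tendstoD) auto
    with eventually_gt_at_top[of 0] show ?case
    proof eventually_elim
      case (elim n)
      show ?case
      proof (intro allI impI empirical_zstieltjes_bounded_below_of_net[OF e c(1,2) elim(1) _ _ cover r(2)])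
        fix w assume "w \<in> Z"
        then show "w \<notin> Nbhd \<mu> e \<and> c \<le> norm (zstieltjes w)
            \<and> norm (empirical_zstieltjes (\<lambda>i. X i \<omega>) n w - zstieltjes w) < c / 8"
          using Z(2) c(3) elim(2) by (auto simp: dist_norm)
      qed (use \<open>\<forall>i. X i \<omega> \<in> S\<close> in auto)
    qed
  qed
  then show ?thesis using c(1) by (intro that[of "3 * c / 4"]) auto
qed

subsection \<open>Bounds on the resolvent\<close>

lemma div_diff_bounds_of_notin_Nbhd:
  assumes z: "z \<notin> Nbhd \<mu> (2 * e)" and e: "e > 0" and y: "y \<in> S \<or> y \<in> Nbhd \<mu> e"
  shows "y \<noteq> z" and "norm (z / (z - y)) \<le> 2 + 3 * supp_radius / e"
proof -
  have "e \<le> dist z y \<and> norm y \<le> 3 * supp_radius + e"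
    using y dist_ge_of_notin_Nbhd[OF z, of y] norm_le_supp_radius[of y] e supp_radius_ge_1
      dist_ge_of_notin_Nbhd_double[OF z] norm_le_of_in_Nbhd by force
  then show "y \<noteq> z" and "norm (z / (z - y)) \<le> 2 + 3 * supp_radius / e"
    using e norm_div_diff_le[of e z y "3 * supp_radius + e"] by (auto simp: add_divide_distrib)
qed

lemma din_entry_mem:
  assumes "s \<le> k" and "k \<le> n" and "i < n - s"
    and "\<And>i. x i \<in> S" and "\<And>j. j \<in> {s+1..k} \<Longrightarrow> \<xi> j \<in> Nbhd \<mu> e"
  shows "din_entry x \<xi> k s n i \<in> S \<or> din_entry x \<xi> k s n i \<in> Nbhd \<mu> e"
proof (cases "i < n - k")
  case False
  then have "i - (n - k) + s + 1 \<in> {s+1..k}" using assms(1-3) by auto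
  with False assms(5) show ?thesis by (simp add: din_entry_def)
qed (use assms(4) in \<open>simp add: din_entry_def\<close>)

lemma din_weight_close_to_empirical:
  fixes K :: nat
  assumes e: "e > 0" and kK: "k \<le> K" and sk: "s \<le> k" and kn: "k \<le> n" and n: "n > 0"
    and x: "\<And>i. x i \<in> S" and \<xi>: "\<And>j. j \<in> {s+1..k} \<Longrightarrow> \<xi> j \<in> Nbhd \<mu> e"
    and z: "z \<notin> Nbhd \<mu> (2 * e)"
  defines "d \<equiv> din_entry x \<xi> k s n"
  shows "norm (1 + (\<Sum>i<n - s. d i / (z - d i)) / of_nat n - empirical_zstieltjes x n z)
    \<le> (K + 2 * K * (2 + 3 * supp_radius / e)) / n"
proof -
  define B where "B = 2 + 3 * supp_radius / e"
  have B: "0 \<le> B" using e supp_radius_ge_1 by (simp add: B_def)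
  have d_bounds: "d i \<noteq> z" "norm (z / (z - d i)) \<le> B" if "i < n - s" for i
    using div_diff_bounds_of_notin_Nbhd[OF z e din_entry_mem[OF sk kn that x \<xi>]]
    by (simp_all add: d_def B_def)
  have x_bound: "norm (z / (z - x i)) \<le> B" for i
    using div_diff_bounds_of_notin_Nbhd[OF z e] x by (simp add: B_def)
  let ?w = "(\<Sum>i<n - s. d i / (z - d i)) / of_nat n"
  have "of_nat n * (1 + ?w - empirical_zstieltjes x n z)
      = of_nat s + ((\<Sum>i\<in>{n-k..<n-s}. z / (z - d i)) - (\<Sum>i\<in>{n-k..<n}. z / (z - x i)))"
    unfolding d_def by (rule din_weight_eq[OF sk kn n d_bounds(1)[unfolded d_def]])
  also have "norm \<dots> \<le> real s + (K * B + K * B)"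
  proof -
    have "norm (\<Sum>i\<in>{n-k..<n-s}. z / (z - d i)) \<le> K * B"
      using d_bounds(2) kK sk kn B by (intro norm_sum_atLeastLessThan_le) auto
    moreover have "norm (\<Sum>i\<in>{n-k..<n}. z / (z - x i)) \<le> K * B"
      using x_bound kK B by (intro norm_sum_atLeastLessThan_le) auto
    ultimately show ?thesis
      by (smt (verit) norm_of_nat norm_triangle_ineq norm_triangle_ineq4)
  qed
  also have "\<dots> \<le> K + 2 * K * B" using sk kK by simp
  finally have "real n * norm (1 + ?w - empirical_zstieltjes x n z) \<le> K + 2 * K * B"
    by (simp add: norm_mult)
  then show ?thesis
    using n by (simp add: B_def field_simps)
qed

lemma Din_resolvent_bounds:
  fixes K :: nat
  assumes e: "e > 0" and kK: "k \<le> K" and sk: "s \<le> k" and kn: "k \<le> n" and n: "n > 0"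
    and x: "\<And>i. x i \<in> S" and \<xi>: "\<And>j. j \<in> {s+1..k} \<Longrightarrow> \<xi> j \<in> Nbhd \<mu> e"
    and c: "c > 0" and lower: "\<And>z. z \<notin> Nbhd \<mu> (2 * e) \<Longrightarrow> c \<le> norm (empirical_zstieltjes x n z)"
    and n_large: "(K + 2 * K * (2 + 3 * supp_radius / e)) / n \<le> c / 2"
  shows "(\<forall>z. z \<notin> Nbhd \<mu> (2 * e) \<longrightarrow> invertible_mat (Rmat (Din x \<xi> k s n) (n - s) n z))
       \<and> (Ffun (Din x \<xi> k s n) (n - s) n) analytic_on (- closure (Nbhd \<mu> (2 * e)))
       \<and> (\<forall>z. z \<notin> Nbhd \<mu> (2 * e) \<longrightarrow> cmod (Ffun (Din x \<xi> k s n) (n - s) n z) \<le> 1 + 2 / c)"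
proof -
  define d where "d = din_entry x \<xi> k s n"
  define w where "w z = (\<Sum>i<n - s. d i / (z - d i)) / of_nat n" for z
  let ?F = "Ffun (Din x \<xi> k s n) (n - s) n"
  have d_ne: "d i \<noteq> z" if "i < n - s" and "z \<notin> Nbhd \<mu> (2 * e)" for i z
    unfolding d_def by (rule div_diff_bounds_of_notin_Nbhd(1)[OF that(2) e din_entry_mem[OF sk kn that(1) x \<xi>]])
  have w_lower: "c / 2 \<le> norm (1 + w z)" if z: "z \<notin> Nbhd \<mu> (2 * e)" for z
  proof -
    have "norm (1 + w z - empirical_zstieltjes x n z) \<le> (K + 2 * K * (2 + 3 * supp_radius / e)) / n"
      unfolding w_def d_def by (rule din_weight_close_to_empirical[OF e kK sk kn n x \<xi> z])
    then show ?thesis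
      using lower[OF z] n_large norm_triangle_ineq2[of "empirical_zstieltjes x n z" "1 + w z"]
        norm_minus_commute[of "1 + w z" "empirical_zstieltjes x n z"] by linarith
  qed
  have resolvent: "invertible_mat (Rmat (Din x \<xi> k s n) (n - s) n z) \<and> ?F z = w z / (1 + w z)"
    if z: "z \<notin> Nbhd \<mu> (2 * e)" for z
    using Rmat_diag_invertible_Ffun[OF Din_eq_diag[of x \<xi> k s n, folded d_def] d_ne[OF _ z] n, folded w_def]
      w_lower[OF z] c by fastforce
  have outside: "z \<notin> Nbhd \<mu> (2 * e)" if "z \<in> - closure (Nbhd \<mu> (2 * e))" for z
    using that closure_subset by auto
  have "z - d i \<noteq> 0" if "i \<in> {..<n - s}" "z \<in> - closure (Nbhd \<mu> (2 * e))" for i z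
    using d_ne[of i z] outside[of z] that by auto
  moreover have "1 + w z \<noteq> 0" if "z \<in> - closure (Nbhd \<mu> (2 * e))" for z
    using w_lower[OF outside[OF that]] c by auto
  ultimately have "(\<lambda>z. w z / (1 + w z)) holomorphic_on - closure (Nbhd \<mu> (2 * e))"
    unfolding w_def using n by (intro holomorphic_intros) auto
  then have "?F holomorphic_on - closure (Nbhd \<mu> (2 * e))"
    by (rule holomorphic_transform) (use resolvent outside in auto)
  moreover have "cmod (?F z) \<le> 1 + 2 / c" if "z \<notin> Nbhd \<mu> (2 * e)" for z
    using resolvent[OF that] norm_div_one_plus_le[of "c / 2" "w z"] w_lower[OF that] c by simp
  ultimately show ?thesis
    using resolvent by (simp add: analytic_on_open open_Compl)
qed

lemma eventually_Din_resolvent_bounds: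
  fixes K :: nat and k :: "nat \<Rightarrow> nat"
  assumes e: "e > 0" and kK: "\<And>n. k n \<le> K" and x: "\<And>i. x i \<in> S" and c: "c > 0"
    and \<xi>: "eventually (\<lambda>n. s \<le> k n \<and> (\<forall>j\<in>{s+1..k n}. \<xi> n j \<in> Nbhd \<mu> e)) sequentially"
    and lower: "eventually (\<lambda>n. \<forall>z. z \<notin> Nbhd \<mu> (2 * e) \<longrightarrow> c \<le> norm (empirical_zstieltjes x n z))
      sequentially"
  shows "eventually (\<lambda>n.
      (\<forall>z. z \<notin> Nbhd \<mu> (2 * e) \<longrightarrow> invertible_mat (Rmat (Din x (\<xi> n) (k n) s n) (n - s) n z))
    \<and> (Ffun (Din x (\<xi> n) (k n) s n) (n - s) n) analytic_on (- closure (Nbhd \<mu> (2 * e)))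
    \<and> (\<forall>z. z \<notin> Nbhd \<mu> (2 * e) \<longrightarrow> cmod (Ffun (Din x (\<xi> n) (k n) s n) (n - s) n z) \<le> 1 + 2 / c))
    sequentially"
proof -
  have "(\<lambda>n. (K + 2 * K * (2 + 3 * supp_radius / e)) / real n) \<longlonglongrightarrow> 0"
    by (rule lim_const_over_n)
  moreover have "c / 2 > 0" using c by simp
  ultimately have "eventually (\<lambda>n. (K + 2 * K * (2 + 3 * supp_radius / e)) / n < c / 2) sequentially"
    by (rule order_tendstoD(2))
  with \<xi> lower eventually_gt_at_top[of K] show ?thesis
  proof eventually_elim
    case (elim n)
    then have "s \<le> k n" "k n \<le> n" "n > 0" and \<xi>_n: "\<And>j. j \<in> {s+1..k n} \<Longrightarrow> \<xi> n j \<in> Nbhd \<mu> e"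
      using kK[of n] by auto
    with elim(2,4) show ?case
      by (intro Din_resolvent_bounds[OF e kK[of n] _ _ _ x \<xi>_n c]) auto
  qed
qed

end

theorem mainTheorem12:
  fixes \<mu> :: "complex measure" and P :: "'w measure"
    and X :: "nat \<Rightarrow> 'w \<Rightarrow> complex"
    and \<xi> :: "nat \<Rightarrow> nat \<Rightarrow> complex" and k :: "nat \<Rightarrow> nat" and K :: nat
    and \<epsilon> :: real and s :: nat
  assumes "prob_space \<mu>" and "sets \<mu> = sets borel"
    and "compact (msupp \<mu>)" and "0 \<in> msupp \<mu>"
    and "prob_space P"
    and "\<And>i. X i \<in> borel_measurable P"
    and "prob_space.indep_vars P (\<lambda>_. borel) X UNIV"
    and "\<And>i. distr P borel (X i) = \<mu>"
    and "\<And>n. k n \<le> K"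
    and "\<epsilon> > 0"
    and "eventually (\<lambda>n. s \<le> k n
            \<and> (\<forall>j\<in>{1..s}. \<xi> n j \<notin> Nbhd \<mu> (3 * \<epsilon>))
            \<and> (\<forall>j\<in>{s+1..k n}. \<xi> n j \<in> Nbhd \<mu> \<epsilon>)) sequentially"
  shows "\<exists>C>0. AE \<omega> in P. eventually (\<lambda>n.
            (\<forall>z. z \<notin> Nbhd \<mu> (2 * \<epsilon>) \<longrightarrow>
                 invertible_mat (Rmat (Din (\<lambda>i. X i \<omega>) (\<xi> n) (k n) s n) (n - s) n z))
          \<and> (Ffun (Din (\<lambda>i. X i \<omega>) (\<xi> n) (k n) s n) (n - s) n)
               analytic_on (- closure (Nbhd \<mu> (2 * \<epsilon>)))
          \<and> (\<forall>z. z \<notin> Nbhd \<mu> (2 * \<epsilon>) \<longrightarrow>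
                 cmod (Ffun (Din (\<lambda>i. X i \<omega>) (\<xi> n) (k n) s n) (n - s) n z) \<le> C))
          sequentially"
proof -
  interpret compactly_supported_prob \<mu>
    using assms(1-4) by (rule compactly_supported_prob.intro)
  have "2 * \<epsilon> > 0" using assms(10) by simp
  then obtain c where c: "c > 0" and lower: "AE \<omega> in P. eventually (\<lambda>n. \<forall>z. z \<notin> Nbhd \<mu> (2 * \<epsilon>)
      \<longrightarrow> c \<le> norm (empirical_zstieltjes (\<lambda>i. X i \<omega>) n z)) sequentially"
    using AE_empirical_zstieltjes_bounded_below[OF assms(5-8)] by blast
  txt \<open>The outliers \<open>\<xi>\<^sub>1, \<dots>, \<xi>\<^sub>s\<close> do not enter \<open>D\<^sub>i\<^sub>n\<close>, so their position is irrelevant here.\<close>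
  have \<xi>: "eventually (\<lambda>n. s \<le> k n \<and> (\<forall>j\<in>{s+1..k n}. \<xi> n j \<in> Nbhd \<mu> \<epsilon>)) sequentially"
    using assms(11) by (rule eventually_mono) blast
  from lower AE_iid_in_msupp[of X P, OF assms(6,8)]
  have "AE \<omega> in P. eventually (\<lambda>n.
            (\<forall>z. z \<notin> Nbhd \<mu> (2 * \<epsilon>) \<longrightarrow>
                 invertible_mat (Rmat (Din (\<lambda>i. X i \<omega>) (\<xi> n) (k n) s n) (n - s) n z))
          \<and> (Ffun (Din (\<lambda>i. X i \<omega>) (\<xi> n) (k n) s n) (n - s) n)
               analytic_on (- closure (Nbhd \<mu> (2 * \<epsilon>)))
          \<and> (\<forall>z. z \<notin> Nbhd \<mu> (2 * \<epsilon>) \<longrightarrow>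
                 cmod (Ffun (Din (\<lambda>i. X i \<omega>) (\<xi> n) (k n) s n) (n - s) n z) \<le> 1 + 2 / c))
          sequentially"
    by eventually_elim (rule eventually_Din_resolvent_bounds[OF assms(10,9) _ c \<xi>], auto)
  then show ?thesis
    using c by (intro exI[of _ "1 + 2 / c"]) (simp add: add_pos_pos)
qed

end
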